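(* The group of $\mathbb{Z}$-algebra automorphisms of $B(K)$ is generated by the automorphisms $\alpha$ of the following form: for some $1\le k\le n$ and some $h\in\mathcal{G}$ not depending on $x_k$, $\alpha$ is induced by $x_k\mapsto x_k+h-2x_kh$, $x_i\mapsto x_i$ ($i\ne k$). Moreover, this automorphism group is isomorphic to the group of all permutations of the $2^n$ vertices of the $n$-dimensional Boolean cube $\{0,1\}^n$.
   Context: $K=\mathbb{Z}[x_1,\ldots,x_n]$ and $B(K)$ is the quotient of $K$ by the ideal $I$ generated by $x_i^2-x_i$, $i=1,\ldots,n$. The set $\mathcal{G}\subseteq\mathbb{Z}[x_1,\ldots,x_n]$ is defined recursively as the smallest set such that: each variable $x_1,\ldots,x_n$ belongs to $\mathcal{G}$; if $P\in\mathcal{G}$ then $1-P\in\mathcal{G}$; if $P_1,P_2\in\mathcal{G}$ then $P_1P_2\in\mathcal{G}$. *)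

theory Defs
  imports "HOL-Algebra.Algebra" "HOL-Library.Poly_Mapping"
begin

type_synonym zpoly = "(nat \<Rightarrow>\<^sub>0 nat) \<Rightarrow>\<^sub>0 int"

definition pvar :: "nat \<Rightarrow> zpoly" where
  "pvar i = Poly_Mapping.single (Poly_Mapping.single i 1) 1"

inductive_set Gset :: "nat \<Rightarrow> zpoly set" for n :: nat where
  var: "i \<in> {1..n} \<Longrightarrow> pvar i \<in> Gset n"
| compl: "P \<in> Gset n \<Longrightarrow> 1 - P \<in> Gset n"
| prod: "P1 \<in> Gset n \<Longrightarrow> P2 \<in> Gset n \<Longrightarrow> P1 * P2 \<in> Gset n"

text \<open>B(K) is represented by its standard normal form: every residue class has a
  unique multilinear representative, i.e. a Z-linear combination of the
  square-free monomials x_S = prod_{i in S} x_i, S a subset of {1..n}.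
  An element is the coefficient function S |-> coefficient of x_S,
  supported in Pow {1..n}.  Multiplication is x_S * x_T = x_(S Un T).\<close>

definition Bcarrier :: "nat \<Rightarrow> (nat set \<Rightarrow> int) set" where
  "Bcarrier n = {p. \<forall>S. p S \<noteq> 0 \<longrightarrow> S \<subseteq> {1..n}}"

definition Badd :: "(nat set \<Rightarrow> int) \<Rightarrow> (nat set \<Rightarrow> int) \<Rightarrow> (nat set \<Rightarrow> int)" where
  "Badd p q = (\<lambda>S. p S + q S)"

definition Bmult :: "(nat set \<Rightarrow> int) \<Rightarrow> (nat set \<Rightarrow> int) \<Rightarrow> (nat set \<Rightarrow> int)" where
  "Bmult p q = (\<lambda>U. \<Sum>S\<in>Pow U. \<Sum>T\<in>Pow U. if S \<union> T = U then p S * q T else 0)"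

definition Bone :: "nat set \<Rightarrow> int" where
  "Bone = (\<lambda>S. if S = {} then 1 else 0)"

definition Bvar :: "nat \<Rightarrow> (nat set \<Rightarrow> int)" where
  "Bvar k = (\<lambda>S. if S = {k} then 1 else 0)"

definition Bring :: "nat \<Rightarrow> (nat set \<Rightarrow> int) ring" where
  "Bring n = \<lparr>carrier = Bcarrier n, monoid.mult = Bmult, one = Bone,
              ring.zero = (\<lambda>_. 0), ring.add = Badd\<rparr>"

text \<open>The canonical projection K -> B(K): a monomial x^m is sent to x_S with
  S the set of variables occurring in m (since x_i^2 = x_i).\<close>

definition Bproj :: "zpoly \<Rightarrow> (nat set \<Rightarrow> int)" where
  "Bproj P = (\<lambda>S. \<Sum>m\<in>{m \<in> Poly_Mapping.keys P. Poly_Mapping.keys m = S}. Poly_Mapping.lookup P m)"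

definition Bindep :: "nat \<Rightarrow> (nat set \<Rightarrow> int) \<Rightarrow> bool" where
  "Bindep k b \<longleftrightarrow> (\<forall>S. b S \<noteq> 0 \<longrightarrow> k \<notin> S)"

text \<open>Z-algebra automorphisms of B(K) = ring automorphisms (every ring map is
  Z-linear), as extensional bijections of the carrier, under composition.\<close>

definition BAut :: "nat \<Rightarrow> ((nat set \<Rightarrow> int) \<Rightarrow> (nat set \<Rightarrow> int)) monoid" where
  "BAut n = BijGroup (Bcarrier n)
     \<lparr>carrier := ring_iso (Bring n) (Bring n) \<inter> Bij (Bcarrier n)\<rparr>"

definition BGens :: "nat \<Rightarrow> ((nat set \<Rightarrow> int) \<Rightarrow> (nat set \<Rightarrow> int)) set" where
  "BGens n = {\<alpha> \<in> carrier (BAut n). \<exists>k\<in>{1..n}. \<exists>h\<in>Gset n.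
      Bindep k (Bproj h) \<and>
      \<alpha> (Bvar k) = (\<lambda>S. Bvar k S + Bproj h S - 2 * Bmult (Bvar k) (Bproj h) S) \<and>
      (\<forall>i\<in>{1..n}. i \<noteq> k \<longrightarrow> \<alpha> (Bvar i) = Bvar i)}"

definition cube :: "nat \<Rightarrow> (nat \<Rightarrow> int) set" where
  "cube n = {1..n} \<rightarrow>\<^sub>E {0, 1}"

end

theory Submission
  imports Defs
begin

(*
  Evaluating the multilinear normal form sum_S c_S x_S at the vertices of the cube {0,1}^n
  identifies B(K) with the ring of integer functions on {0,1}^n; Moebius inversion on the
  Boolean lattice is the inverse map.  Following a ring automorphism of this function ring by
  evaluation at a vertex gives a ring homomorphism to Z, which can only be evaluation at a
  vertex.  Hence every automorphism is precomposition with a permutation of the cube, and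
  Aut B(K) is isomorphic to the symmetric group of {0,1}^n.

  If h is the indicator of an edge {a, a'} of the cube in direction k, i.e. the product of the
  literals x_i or 1 - x_i (i ~= k) that describe a, then h lies in G, does not depend on x_k,
  and x_k |-> x_k + h - 2 x_k h swaps a and a'.  The cube is connected, so these
  transpositions generate the whole symmetric group.
*)

section \<open>Permutation groups generated by transpositions\<close>

lemma carrier_BijGroup: "carrier (BijGroup S) = Bij S"
  by (simp add: BijGroup_def)

lemma one_BijGroup: "\<one>\<^bsub>BijGroup S\<^esub> = (\<lambda>x\<in>S. x)"
  by (simp add: BijGroup_def)

lemma mult_BijGroup: "f \<in> Bij S \<Longrightarrow> g \<in> Bij S \<Longrightarrow> f \<otimes>\<^bsub>BijGroup S\<^esub> g = compose S f g"
  by (simp add: BijGroup_def)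

lemma restrict_permutes_in_Bij: "p permutes S \<Longrightarrow> restrict p S \<in> Bij S"
  unfolding Bij_def by (simp add: permutes_imp_bij)

lemma restrict_transpose_in_Bij: "a \<in> S \<Longrightarrow> b \<in> S \<Longrightarrow> restrict (transpose a b) S \<in> Bij S"
  by (rule restrict_permutes_in_Bij[OF permutes_swap_id])

lemma restrict_id_BijGroup: "restrict id S = \<one>\<^bsub>BijGroup S\<^esub>"
  by (simp add: one_BijGroup id_def)

lemma transpositions_subset_carrier_BijGroup:
  assumes "E \<subseteq> S \<times> S"
  shows "{restrict (transpose a b) S | a b. (a, b) \<in> E} \<subseteq> carrier (BijGroup S)"
proof
  fix t assume "t \<in> {restrict (transpose a b) S | a b. (a, b) \<in> E}"
  then obtain a b where "t = restrict (transpose a b) S" "(a, b) \<in> E" by blast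
  with assms show "t \<in> carrier (BijGroup S)"
    using restrict_transpose_in_Bij[of a S b] by (auto simp: carrier_BijGroup)
qed

lemma Bij_imp_restrict_permutes:
  assumes f: "f \<in> Bij S"
  obtains p where "p permutes S" "f = restrict p S"
proof
  define p where "p x = (if x \<in> S then f x else x)" for x
  have "bij_betw p S S"
  proof (rule bij_betw_cong[THEN iffD2])
    show "bij_betw f S S" using f by (simp add: Bij_def)
  qed (simp add: p_def)
  then show "p permutes S"
    by (rule bij_imp_permutes) (simp add: p_def)
  show "f = restrict p S"
    using Bij_imp_extensional[OF f] by (auto simp: p_def extensional_def)
qed

lemma restrict_comp_BijGroup:
  assumes "f permutes S" "g permutes S"
  shows "restrict (f \<circ> g) S = restrict f S \<otimes>\<^bsub>BijGroup S\<^esub> restrict g S"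
proof -
  have "restrict (f \<circ> g) S = compose S (restrict f S) (restrict g S)"
    using permutes_in_image[OF assms(2)] by (auto simp: compose_def)
  also have "\<dots> = restrict f S \<otimes>\<^bsub>BijGroup S\<^esub> restrict g S"
    using assms by (intro mult_BijGroup[symmetric] restrict_permutes_in_Bij)
  finally show ?thesis .
qed

lemma transpositions_generate_BijGroup:
  assumes "finite S"
  shows "generate (BijGroup S) {restrict (transpose a b) S | a b. a \<in> S \<and> b \<in> S}
    = carrier (BijGroup S)"
    (is "generate _ ?T = _")
proof
  interpret group "BijGroup S" by (rule group_BijGroup)
  show "generate (BijGroup S) ?T \<subseteq> carrier (BijGroup S)"
    using restrict_transpose_in_Bij by (intro generate_incl) (auto simp: carrier_BijGroup)
  show "carrier (BijGroup S) \<subseteq> generate (BijGroup S) ?T"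
  proof
    fix f assume "f \<in> carrier (BijGroup S)"
    then obtain p where p: "p permutes S" "f = restrict p S"
      by (auto simp: carrier_BijGroup elim: Bij_imp_restrict_permutes)
    have "restrict p S \<in> generate (BijGroup S) ?T"
      using p(1) assms
    proof (induction p rule: permutes_induct)
      case id
      show ?case unfolding restrict_id_BijGroup by (rule generate.one)
    next
      case (swap a b q)
      have "restrict (transpose a b) S \<in> generate (BijGroup S) ?T"
        using swap.hyps by (intro generate.incl) blast
      then have "restrict (transpose a b) S \<otimes>\<^bsub>BijGroup S\<^esub> restrict q S \<in> generate (BijGroup S) ?T"
        using swap.IH by (rule generate.eng)
      moreover have "restrict (transpose a b \<circ> q) S
          = restrict (transpose a b) S \<otimes>\<^bsub>BijGroup S\<^esub> restrict q S"
        using swap.hyps by (intro restrict_comp_BijGroup permutes_swap_id)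
      ultimately show ?case by (simp only:)
    qed
    then show "f \<in> generate (BijGroup S) ?T" by (simp only: p(2))
  qed
qed

lemma restrict_transpose_in_generate_if_rtrancl:
  assumes "E \<subseteq> S \<times> S" "(a, b) \<in> E\<^sup>*" "a \<in> S"
  shows "restrict (transpose a b) S
    \<in> generate (BijGroup S) {restrict (transpose x y) S | x y. (x, y) \<in> E}"
    (is "_ \<in> ?G")
  using assms(2)
proof (induction rule: rtrancl_induct)
  case base
  show ?case unfolding transpose_same restrict_id_BijGroup by (rule generate.one)
next
  case (step c b)
  have bc: "b \<in> S" "c \<in> S" using step.hyps(2) assms(1) by auto
  have edge: "restrict (transpose c b) S \<in> ?G" using step.hyps(2) by (intro generate.incl) blast
  consider "a = b" | "a = c" | "b = c" | "a \<noteq> b" "a \<noteq> c" "b \<noteq> c" by blast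
  then show ?case
  proof cases
    case 1
    show ?thesis unfolding 1 transpose_same restrict_id_BijGroup by (rule generate.one)
  next
    case 2
    show ?thesis unfolding 2 by (rule edge)
  next
    case 3
    show ?thesis unfolding 3 by (rule step.IH)
  next
    case 4
    have cb: "transpose c b permutes S" and ac: "transpose a c permutes S"
      using assms(3) bc by (simp_all add: permutes_swap_id)
    have "transpose a b = transpose c b \<circ> transpose a c \<circ> transpose c b"
      using 4 by (auto simp: fun_eq_iff transpose_def)
    then have "restrict (transpose a b) S
        = restrict (transpose c b \<circ> transpose a c) S \<otimes>\<^bsub>BijGroup S\<^esub> restrict (transpose c b) S"
      using restrict_comp_BijGroup[OF permutes_compose[OF ac cb] cb] by (simp only:)
    also have "\<dots> = restrict (transpose c b) S \<otimes>\<^bsub>BijGroup S\<^esub> restrict (transpose a c) S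
          \<otimes>\<^bsub>BijGroup S\<^esub> restrict (transpose c b) S"
      by (simp only: restrict_comp_BijGroup[OF cb ac])
    moreover have "\<dots> \<in> ?G"
      using edge step.IH by (intro generate.eng)
    ultimately show ?thesis by (simp only:)
  qed
qed

lemma connected_transpositions_generate_BijGroup:
  assumes "finite S" "E \<subseteq> S \<times> S" "\<And>a b. a \<in> S \<Longrightarrow> b \<in> S \<Longrightarrow> (a, b) \<in> E\<^sup>*"
  shows "generate (BijGroup S) {restrict (transpose a b) S | a b. (a, b) \<in> E}
    = carrier (BijGroup S)"
    (is "?G = _")
proof
  interpret group "BijGroup S" by (rule group_BijGroup)
  have sub: "{restrict (transpose a b) S | a b. (a, b) \<in> E} \<subseteq> carrier (BijGroup S)"
    using assms(2) by (rule transpositions_subset_carrier_BijGroup)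
  then show "?G \<subseteq> carrier (BijGroup S)" by (rule generate_incl)
  have "{restrict (transpose a b) S | a b. a \<in> S \<and> b \<in> S} \<subseteq> ?G"
  proof
    fix t assume "t \<in> {restrict (transpose a b) S | a b. a \<in> S \<and> b \<in> S}"
    then obtain a b where t: "t = restrict (transpose a b) S" and ab: "a \<in> S" "b \<in> S" by blast
    show "t \<in> ?G"
      unfolding t using assms(2) assms(3)[OF ab] ab(1)
        by (rule restrict_transpose_in_generate_if_rtrancl)
  qed
  then have "generate (BijGroup S) {restrict (transpose a b) S | a b. a \<in> S \<and> b \<in> S} \<subseteq> ?G"
    by (rule generate_subgroup_incl[OF _ generate_is_subgroup[OF sub]])
  then show "carrier (BijGroup S) \<subseteq> ?G"
    unfolding transpositions_generate_BijGroup[OF assms(1)] .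
qed

section \<open>Ring homomorphisms from integer functions to the integers\<close>

definition funs_on :: "'a set \<Rightarrow> ('a \<Rightarrow> int) set" where
  "funs_on S = {f. \<forall>x. x \<notin> S \<longrightarrow> f x = 0}"

locale int_character =
  fixes S :: "'a set" and \<chi> :: "('a \<Rightarrow> int) \<Rightarrow> int"
  assumes finite_S: "finite S"
    and hom_add: "f \<in> funs_on S \<Longrightarrow> g \<in> funs_on S \<Longrightarrow> \<chi> (\<lambda>x. f x + g x) = \<chi> f + \<chi> g"
    and hom_mult: "f \<in> funs_on S \<Longrightarrow> g \<in> funs_on S \<Longrightarrow> \<chi> (\<lambda>x. f x * g x) = \<chi> f * \<chi> g"
    and hom_one: "\<chi> (\<lambda>x. if x \<in> S then 1 else 0) = 1"
begin

lemma hom_zero: "\<chi> (\<lambda>x. 0) = 0"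
  using hom_add[of "\<lambda>x. 0" "\<lambda>x. 0"] by (simp add: funs_on_def)

lemma hom_scale:
  assumes f: "f \<in> funs_on S"
  shows "\<chi> (\<lambda>x. c * f x) = c * \<chi> f"
proof -
  have scale_nat: "\<chi> (\<lambda>x. int m * f x) = int m * \<chi> f" for m
  proof (induction m)
    case (Suc m)
    have "\<chi> (\<lambda>x. int (Suc m) * f x) = \<chi> (\<lambda>x. int m * f x + f x)"
      by (simp add: algebra_simps)
    also have "\<dots> = int m * \<chi> f + \<chi> f"
      using hom_add[of "\<lambda>x. int m * f x" f] f Suc.IH by (simp add: funs_on_def)
    finally show ?case by (simp add: algebra_simps)
  qed (simp add: hom_zero)
  have scale_neg: "\<chi> (\<lambda>x. - (int m * f x)) = - (int m * \<chi> f)" for m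
    using hom_add[of "\<lambda>x. - (int m * f x)" "\<lambda>x. int m * f x"] f scale_nat[of m]
    by (simp add: funs_on_def hom_zero)
  show ?thesis
  proof (cases "c \<ge> 0")
    case True
    then show ?thesis using scale_nat[of "nat c"] by simp
  next
    case False
    then show ?thesis using scale_neg[of "nat (- c)"] by simp
  qed
qed

lemma hom_sum:
  assumes "finite A" "\<And>a. a \<in> A \<Longrightarrow> g a \<in> funs_on S"
  shows "\<chi> (\<lambda>x. \<Sum>a\<in>A. g a x) = (\<Sum>a\<in>A. \<chi> (g a))"
  using assms
proof (induction A rule: finite_induct)
  case (insert a A)
  have "(\<lambda>x. \<Sum>b\<in>A. g b x) \<in> funs_on S"
    using insert.prems by (simp add: funs_on_def)
  then show ?case
    using insert hom_add[of "g a" "\<lambda>x. \<Sum>b\<in>A. g b x"] by simp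
qed (simp add: hom_zero)

theorem is_point_evaluation:
  obtains u where "u \<in> S" "\<And>f. f \<in> funs_on S \<Longrightarrow> \<chi> f = f u"
proof -
  define \<delta> where "\<delta> u x = (if x = u then 1 else 0 :: int)" for u x :: 'a
  have \<delta>: "\<delta> u \<in> funs_on S" if "u \<in> S" for u
    using that by (auto simp: \<delta>_def funs_on_def)
  have "(\<lambda>x. \<Sum>u\<in>S. \<delta> u x) = (\<lambda>x. if x \<in> S then 1 else 0)"
    using finite_S by (auto simp: \<delta>_def)
  moreover have "\<chi> (\<lambda>x. \<Sum>u\<in>S. \<delta> u x) = (\<Sum>u\<in>S. \<chi> (\<delta> u))"
    using finite_S \<delta> by (rule hom_sum)
  ultimately have "(\<Sum>u\<in>S. \<chi> (\<delta> u)) = 1"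
    using hom_one by simp
  then obtain u where u: "u \<in> S" "\<chi> (\<delta> u) \<noteq> 0"
    by (metis sum.neutral zero_neq_one)
  have "(\<lambda>x. \<delta> u x * \<delta> u x) = \<delta> u" by (auto simp: \<delta>_def)
  then have "\<chi> (\<delta> u) * \<chi> (\<delta> u) = \<chi> (\<delta> u)"
    using hom_mult[OF \<delta> \<delta>, OF u(1) u(1)] by simp
  then have \<chi>\<delta>: "\<chi> (\<delta> u) = 1" using u(2) by simp
  show thesis
  proof (rule that[OF u(1)])
    fix f assume f: "f \<in> funs_on S"
    have "(\<lambda>x. f x * \<delta> u x) = (\<lambda>x. f u * \<delta> u x)" by (auto simp: \<delta>_def)
    then have "\<chi> f * \<chi> (\<delta> u) = f u * \<chi> (\<delta> u)"
      using hom_mult[OF f \<delta>[OF u(1)]] hom_scale[OF \<delta>[OF u(1)]] by auto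
    then show "\<chi> f = f u" using \<chi>\<delta> by simp
  qed
qed

end

section \<open>B(K) as the ring of integer functions on the cube\<close>

definition ones :: "nat \<Rightarrow> (nat \<Rightarrow> int) \<Rightarrow> nat set" where
  "ones n v = {i \<in> {1..n}. v i = 1}"

definition vertex :: "nat \<Rightarrow> nat set \<Rightarrow> (nat \<Rightarrow> int)" where
  "vertex n A = (\<lambda>i\<in>{1..n}. if i \<in> A then 1 else 0)"

lemma finite_cube: "finite (cube n)"
  by (simp add: cube_def finite_PiE)

lemma cube_coordinate: "v \<in> cube n \<Longrightarrow> i \<in> {1..n} \<Longrightarrow> v i = 0 \<or> v i = 1"
  by (auto simp: cube_def)

lemma vertex_in_cube: "vertex n A \<in> cube n"
  by (simp add: cube_def vertex_def)

lemma ones_subset: "ones n v \<subseteq> {1..n}"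
  by (auto simp: ones_def)

lemma finite_ones: "finite (ones n v)"
  using ones_subset finite_subset by blast

lemma vertex_ones: "v \<in> cube n \<Longrightarrow> vertex n (ones n v) = v"
  by (force simp: cube_def vertex_def ones_def PiE_iff extensional_def)

lemma ones_vertex: "A \<subseteq> {1..n} \<Longrightarrow> ones n (vertex n A) = A"
  by (auto simp: ones_def vertex_def)

lemma cube_eqI: "v \<in> cube n \<Longrightarrow> w \<in> cube n \<Longrightarrow> (\<And>i. i \<in> {1..n} \<Longrightarrow> v i = w i) \<Longrightarrow> v = w"
  unfolding cube_def by (rule PiE_ext)

lemma mem_Bcarrier_iff: "p \<in> Bcarrier n \<longleftrightarrow> (\<forall>S. \<not> S \<subseteq> {1..n} \<longrightarrow> p S = 0)"
  unfolding Bcarrier_def by blast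

lemma Bcarrier_outside: "p \<in> Bcarrier n \<Longrightarrow> \<not> S \<subseteq> {1..n} \<Longrightarrow> p S = 0"
  unfolding Bcarrier_def by blast

lemma Badd_in_Bcarrier: "p \<in> Bcarrier n \<Longrightarrow> q \<in> Bcarrier n \<Longrightarrow> Badd p q \<in> Bcarrier n"
  by (simp add: mem_Bcarrier_iff Badd_def)

lemma Bmult_in_Bcarrier:
  assumes "p \<in> Bcarrier n" "q \<in> Bcarrier n"
  shows "Bmult p q \<in> Bcarrier n"
proof -
  have "Bmult p q U = 0" if "\<not> U \<subseteq> {1..n}" for U
  proof -
    have "p S * q T = 0" if "S \<union> T = U" for S T
      using \<open>\<not> U \<subseteq> {1..n}\<close> that Bcarrier_outside[OF assms(1)] Bcarrier_outside[OF assms(2)]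
      by (metis Un_subset_iff mult_zero_left mult_zero_right)
    then show ?thesis by (auto simp: Bmult_def intro!: sum.neutral)
  qed
  then show ?thesis by (simp add: mem_Bcarrier_iff)
qed

lemma Bone_in_Bcarrier: "Bone \<in> Bcarrier n"
  by (simp add: Bcarrier_def Bone_def)

lemma Bvar_in_Bcarrier: "k \<in> {1..n} \<Longrightarrow> Bvar k \<in> Bcarrier n"
  by (simp add: Bcarrier_def Bvar_def)

(* The value of sum_S p S x_S at the vertex v: x_S(v) = 1 iff S is a subset of ones n v. *)

definition Beval :: "nat \<Rightarrow> (nat set \<Rightarrow> int) \<Rightarrow> (nat \<Rightarrow> int) \<Rightarrow> int" where
  "Beval n p v = (if v \<in> cube n then \<Sum>S\<in>Pow (ones n v). p S else 0)"

(* Moebius inversion: the element of B(K) with prescribed values at the vertices. *)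

definition Binterp :: "nat \<Rightarrow> ((nat \<Rightarrow> int) \<Rightarrow> int) \<Rightarrow> (nat set \<Rightarrow> int)" where
  "Binterp n f = (\<lambda>S. if S \<subseteq> {1..n}
     then (-1) ^ card S * (\<Sum>T\<in>Pow S. (-1) ^ card T * f (vertex n T)) else 0)"

lemma Beval_vertex: "A \<subseteq> {1..n} \<Longrightarrow> Beval n p (vertex n A) = (\<Sum>S\<in>Pow A. p S)"
  by (simp add: Beval_def vertex_in_cube ones_vertex)

lemma Beval_in_funs_on: "Beval n p \<in> funs_on (cube n)"
  by (simp add: Beval_def funs_on_def)

lemma Binterp_in_Bcarrier: "Binterp n f \<in> Bcarrier n"
  by (simp add: Binterp_def Bcarrier_def)

lemma Binterp_Beval:
  assumes "p \<in> Bcarrier n"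
  shows "Binterp n (Beval n p) = p"
proof
  fix S
  show "Binterp n (Beval n p) S = p S"
  proof (cases "S \<subseteq> {1..n}")
    case True
    then have "finite S" using finite_subset by blast
    have "(\<Sum>T\<in>Pow S. (-1) ^ card T * Beval n p (vertex n T))
        = (\<Sum>T\<in>Pow S. (-1) ^ card T * (\<Sum>U\<in>Pow T. p U))"
      using True by (intro sum.cong) (auto simp: Beval_vertex)
    also have "\<dots> = (-1) ^ card S * p S"
      by (rule inclusion_exclusion_symmetric[OF _ \<open>finite S\<close>, symmetric])
        (simp flip: power_add mult.assoc)
    finally show ?thesis
      using True by (simp add: Binterp_def flip: power_add mult.assoc)
  next
    case False
    then show ?thesis using assms by (simp add: Binterp_def Bcarrier_outside)
  qed
qed

lemma Beval_Binterp:
  assumes "f \<in> funs_on (cube n)"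
  shows "Beval n (Binterp n f) = f"
proof
  fix v
  show "Beval n (Binterp n f) v = f v"
  proof (cases "v \<in> cube n")
    case True
    have "f (vertex n (ones n v))
        = (\<Sum>T\<in>Pow (ones n v). (-1) ^ card T * (\<Sum>U\<in>Pow T. (-1) ^ card U * f (vertex n U)))"
      by (rule inclusion_exclusion_symmetric[OF _ finite_ones]) simp
    also have "\<dots> = (\<Sum>T\<in>Pow (ones n v). Binterp n f T)"
      using ones_subset by (intro sum.cong) (auto simp: Binterp_def)
    finally show ?thesis
      using True by (simp add: Beval_def vertex_ones)
  next
    case False
    then show ?thesis using assms by (simp add: Beval_def funs_on_def)
  qed
qed

lemma Beval_inj:
  assumes "p \<in> Bcarrier n" "q \<in> Bcarrier n" "\<And>v. v \<in> cube n \<Longrightarrow> Beval n p v = Beval n q v"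
  shows "p = q"
proof -
  have "Beval n p = Beval n q"
    using assms(3) by (auto simp: Beval_def)
  then show ?thesis
    using Binterp_Beval assms(1,2) by metis
qed

lemma Beval_Badd: "Beval n (Badd p q) v = Beval n p v + Beval n q v"
  by (simp add: Beval_def Badd_def sum.distrib)

lemma Beval_Bone: "Beval n Bone v = (if v \<in> cube n then 1 else 0)"
  by (simp add: Beval_def Bone_def finite_ones)

lemma Beval_Bvar: "v \<in> cube n \<Longrightarrow> k \<in> {1..n} \<Longrightarrow> Beval n (Bvar k) v = v k"
  using cube_coordinate[of v n k] by (auto simp: Beval_def Bvar_def finite_ones ones_def)

lemma Bmult_eq_sum_Pow:
  assumes "finite A" "U \<subseteq> A"
  shows "Bmult p q U = (\<Sum>S\<in>Pow A. \<Sum>T\<in>Pow A. if S \<union> T = U then p S * q T else 0)"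
proof -
  have "(\<Sum>T\<in>Pow U. if S \<union> T = U then p S * q T else 0)
      = (\<Sum>T\<in>Pow A. if S \<union> T = U then p S * q T else 0)" for S
    using assms by (intro sum.mono_neutral_left) auto
  then have "Bmult p q U = (\<Sum>S\<in>Pow U. \<Sum>T\<in>Pow A. if S \<union> T = U then p S * q T else 0)"
    by (simp add: Bmult_def)
  also have "\<dots> = (\<Sum>S\<in>Pow A. \<Sum>T\<in>Pow A. if S \<union> T = U then p S * q T else 0)"
    using assms by (intro sum.mono_neutral_left) (auto intro!: sum.neutral)
  finally show ?thesis .
qed

lemma Beval_Bmult: "Beval n (Bmult p q) v = Beval n p v * Beval n q v"
proof (cases "v \<in> cube n")
  case True
  define A where "A = ones n v"
  have "finite A" by (simp add: A_def finite_ones)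
  then have "Beval n (Bmult p q) v
      = (\<Sum>U\<in>Pow A. \<Sum>S\<in>Pow A. \<Sum>T\<in>Pow A. if S \<union> T = U then p S * q T else 0)"
    using True by (simp add: Beval_def Bmult_eq_sum_Pow flip: A_def)
  also have "\<dots> = (\<Sum>S\<in>Pow A. \<Sum>T\<in>Pow A. \<Sum>U\<in>Pow A. if S \<union> T = U then p S * q T else 0)"
    by (subst sum.swap) (rule sum.cong[OF refl], rule sum.swap)
  also have "\<dots> = (\<Sum>S\<in>Pow A. \<Sum>T\<in>Pow A. p S * q T)"
  proof (intro sum.cong refl)
    fix S T assume "S \<in> Pow A" "T \<in> Pow A"
    then have "S \<union> T \<in> Pow A" by auto
    then show "(\<Sum>U\<in>Pow A. if S \<union> T = U then p S * q T else 0) = p S * q T"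
      using \<open>finite A\<close> by (simp add: sum.delta)
  qed
  also have "\<dots> = Beval n p v * Beval n q v"
    using True by (simp add: Beval_def A_def sum_product)
  finally show ?thesis .
qed (simp add: Beval_def)

lemma Beval_add_diff_mult:
  "Beval n (\<lambda>S. p S + q S - c * r S) v = Beval n p v + Beval n q v - c * Beval n r v"
  by (simp add: Beval_def sum.distrib sum_subtractf sum_distrib_left)

lemma Binterp_add:
  "f \<in> funs_on (cube n) \<Longrightarrow> g \<in> funs_on (cube n) \<Longrightarrow>
    Binterp n (\<lambda>v. f v + g v) = Badd (Binterp n f) (Binterp n g)"
  by (rule Beval_inj[of _ n])
    (simp_all add: Binterp_in_Bcarrier Badd_in_Bcarrier Beval_Badd Beval_Binterp funs_on_def)

lemma Binterp_mult:
  "f \<in> funs_on (cube n) \<Longrightarrow> g \<in> funs_on (cube n) \<Longrightarrow>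
    Binterp n (\<lambda>v. f v * g v) = Bmult (Binterp n f) (Binterp n g)"
  by (rule Beval_inj[of _ n])
    (simp_all add: Binterp_in_Bcarrier Bmult_in_Bcarrier Beval_Bmult Beval_Binterp funs_on_def)

lemma Binterp_one: "Binterp n (\<lambda>v. if v \<in> cube n then 1 else 0) = Bone"
  by (rule Beval_inj[of _ n])
    (simp_all add: Binterp_in_Bcarrier Bone_in_Bcarrier Beval_Bone Beval_Binterp funs_on_def)

lemma vertices_separated_by_Beval:
  assumes "v \<in> cube n" "w \<in> cube n" "\<And>p. p \<in> Bcarrier n \<Longrightarrow> Beval n p v = Beval n p w"
  shows "v = w"
proof -
  define \<delta> where "\<delta> u = (if u = v then 1 else 0 :: int)" for u
  have "\<delta> \<in> funs_on (cube n)" using assms(1) by (auto simp: \<delta>_def funs_on_def)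
  then have "\<delta> v = \<delta> w"
    using assms(3)[OF Binterp_in_Bcarrier[of n \<delta>]] by (simp add: Beval_Binterp)
  then show ?thesis by (simp add: \<delta>_def split: if_splits)
qed

section \<open>Automorphisms of B(K) are permutations of the cube\<close>

lemma carrier_BAut: "carrier (BAut n) = ring_iso (Bring n) (Bring n) \<inter> Bij (Bcarrier n)"
  by (simp add: BAut_def BijGroup_def)

lemma mult_BAut: "monoid.mult (BAut n) = monoid.mult (BijGroup (Bcarrier n))"
  by (simp add: BAut_def)

lemma mem_carrier_BAut_iff:
  "a \<in> carrier (BAut n) \<longleftrightarrow>
     a \<in> extensional (Bcarrier n) \<and> bij_betw a (Bcarrier n) (Bcarrier n) \<and>
     (\<forall>p\<in>Bcarrier n. \<forall>q\<in>Bcarrier n.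
        a (Badd p q) = Badd (a p) (a q) \<and> a (Bmult p q) = Bmult (a p) (a q)) \<and>
     a Bone = Bone"
  unfolding carrier_BAut ring_iso_def ring_hom_def Bij_def
  by (auto simp: Bring_def bij_betw_def)

lemma BAut_character:
  assumes a: "a \<in> carrier (BAut n)" and w: "w \<in> cube n"
  obtains u where "u \<in> cube n" "\<And>p. p \<in> Bcarrier n \<Longrightarrow> Beval n (a p) w = Beval n p u"
proof -
  have hom: "a (Badd p q) = Badd (a p) (a q)" "a (Bmult p q) = Bmult (a p) (a q)"
    if "p \<in> Bcarrier n" "q \<in> Bcarrier n" for p q
    using a that by (simp_all add: mem_carrier_BAut_iff)
  interpret int_character "cube n" "\<lambda>f. Beval n (a (Binterp n f)) w"
  proof
    show "finite (cube n)" by (rule finite_cube)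
  next
    fix f g assume "f \<in> funs_on (cube n)" "g \<in> funs_on (cube n)"
    then show "Beval n (a (Binterp n (\<lambda>v. f v + g v))) w
          = Beval n (a (Binterp n f)) w + Beval n (a (Binterp n g)) w"
      and "Beval n (a (Binterp n (\<lambda>v. f v * g v))) w
          = Beval n (a (Binterp n f)) w * Beval n (a (Binterp n g)) w"
      by (simp_all add: Binterp_add Binterp_mult hom Binterp_in_Bcarrier Beval_Badd Beval_Bmult)
  next
    show "Beval n (a (Binterp n (\<lambda>v. if v \<in> cube n then 1 else 0))) w = 1"
      using a w by (simp add: Binterp_one mem_carrier_BAut_iff Beval_Bone)
  qed
  obtain u where u: "u \<in> cube n" "\<And>f. f \<in> funs_on (cube n) \<Longrightarrow> Beval n (a (Binterp n f)) w = f u"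
    using is_point_evaluation by blast
  show thesis
  proof (rule that[OF u(1)])
    fix p assume "p \<in> Bcarrier n"
    then show "Beval n (a p) w = Beval n p u"
      using u(2)[OF Beval_in_funs_on[of n p]] by (simp add: Binterp_Beval)
  qed
qed

(* p |-> p o sigma, for elements of B(K) read as functions on the cube. *)

definition pullback :: "nat \<Rightarrow> ((nat \<Rightarrow> int) \<Rightarrow> (nat \<Rightarrow> int)) \<Rightarrow> (nat set \<Rightarrow> int) \<Rightarrow> (nat set \<Rightarrow> int)" where
  "pullback n \<sigma> = (\<lambda>p\<in>Bcarrier n. Binterp n (\<lambda>v. if v \<in> cube n then Beval n p (\<sigma> v) else 0))"

lemma pullback_in_Bcarrier: "p \<in> Bcarrier n \<Longrightarrow> pullback n \<sigma> p \<in> Bcarrier n"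
  by (simp add: pullback_def Binterp_in_Bcarrier)

lemma Beval_pullback: "p \<in> Bcarrier n \<Longrightarrow> v \<in> cube n \<Longrightarrow> Beval n (pullback n \<sigma> p) v = Beval n p (\<sigma> v)"
  by (simp add: pullback_def Beval_Binterp funs_on_def)

lemma pullback_cong: "(\<And>v. v \<in> cube n \<Longrightarrow> \<sigma> v = \<tau> v) \<Longrightarrow> pullback n \<sigma> = pullback n \<tau>"
  unfolding pullback_def by (intro restrict_ext arg_cong[where f = "Binterp n"]) auto

lemma pullback_comp:
  assumes "\<And>v. v \<in> cube n \<Longrightarrow> \<tau> v \<in> cube n"
  shows "pullback n (\<sigma> \<circ> \<tau>) = compose (Bcarrier n) (pullback n \<tau>) (pullback n \<sigma>)"
proof
  fix p
  show "pullback n (\<sigma> \<circ> \<tau>) p = compose (Bcarrier n) (pullback n \<tau>) (pullback n \<sigma>) p"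
  proof (cases "p \<in> Bcarrier n")
    case True
    then show ?thesis
      using assms
      by (auto intro!: Beval_inj[of _ n] simp: compose_def pullback_in_Bcarrier Beval_pullback)
  qed (simp add: pullback_def compose_def)
qed

lemma pullback_in_BAut:
  assumes \<sigma>: "bij_betw \<sigma> (cube n) (cube n)"
  shows "pullback n \<sigma> \<in> carrier (BAut n)"
proof -
  have \<sigma>_cube: "\<sigma> v \<in> cube n" if "v \<in> cube n" for v
    using bij_betwE[OF \<sigma>] that by blast
  define \<tau> where "\<tau> = inv_into (cube n) \<sigma>"
  have \<tau>: "bij_betw \<tau> (cube n) (cube n)" unfolding \<tau>_def by (rule bij_betw_inv_into[OF \<sigma>])
  have inverse: "pullback n \<rho> (pullback n \<rho>' p) = p"
    if "p \<in> Bcarrier n" "\<rho> \<in> cube n \<rightarrow> cube n" "\<And>v. v \<in> cube n \<Longrightarrow> \<rho>' (\<rho> v) = v" for p \<rho> \<rho>'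
    using that by (intro Beval_inj[of _ n]) (auto simp: pullback_in_Bcarrier Beval_pullback Pi_iff)
  have "bij_betw (pullback n \<sigma>) (Bcarrier n) (Bcarrier n)"
    using inverse[OF _ bij_betw_imp_funcset[OF \<tau>]] inverse[OF _ bij_betw_imp_funcset[OF \<sigma>]]
      bij_betw_inv_into_left[OF \<sigma>] bij_betw_inv_into_right[OF \<sigma>]
    by (intro bij_betw_byWitness[where f' = "pullback n \<tau>"]) (auto simp: \<tau>_def pullback_in_Bcarrier)
  moreover have "pullback n \<sigma> (Badd p q) = Badd (pullback n \<sigma> p) (pullback n \<sigma> q)"
    and "pullback n \<sigma> (Bmult p q) = Bmult (pullback n \<sigma> p) (pullback n \<sigma> q)"
    if "p \<in> Bcarrier n" "q \<in> Bcarrier n" for p q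
    using that \<sigma>_cube
    by (auto intro!: Beval_inj[of _ n] simp: pullback_in_Bcarrier Beval_pullback Badd_in_Bcarrier
        Bmult_in_Bcarrier Beval_Badd Beval_Bmult)
  moreover have "pullback n \<sigma> Bone = Bone"
    using \<sigma>_cube
    by (auto intro!: Beval_inj[of _ n]
        simp: pullback_in_Bcarrier Beval_pullback Bone_in_Bcarrier Beval_Bone)
  ultimately show ?thesis
    by (simp add: mem_carrier_BAut_iff pullback_def)
qed

lemma inj_on_if_pullback_surj:
  assumes "Bcarrier n \<subseteq> pullback n \<sigma> ` Bcarrier n"
  shows "inj_on \<sigma> (cube n)"
proof (rule inj_onI)
  fix v w assume vw: "v \<in> cube n" "w \<in> cube n" "\<sigma> v = \<sigma> w"
  show "v = w"
  proof (rule vertices_separated_by_Beval[OF vw(1,2)])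
    fix q assume "q \<in> Bcarrier n"
    then obtain p where "p \<in> Bcarrier n" "q = pullback n \<sigma> p" using assms by blast
    then show "Beval n q v = Beval n q w" using vw by (simp add: Beval_pullback)
  qed
qed

lemma BAut_eq_pullback:
  assumes a: "a \<in> carrier (BAut n)"
  obtains \<rho> where "\<rho> \<in> cube n \<rightarrow> cube n" "a = pullback n \<rho>"
proof -
  have "\<forall>w\<in>cube n. \<exists>u. u \<in> cube n \<and> (\<forall>p\<in>Bcarrier n. Beval n (a p) w = Beval n p u)"
  proof
    fix w assume "w \<in> cube n"
    then obtain u where "u \<in> cube n" "\<And>p. p \<in> Bcarrier n \<Longrightarrow> Beval n (a p) w = Beval n p u"
      using BAut_character[OF a] by blast
    then show "\<exists>u. u \<in> cube n \<and> (\<forall>p\<in>Bcarrier n. Beval n (a p) w = Beval n p u)" by blast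
  qed
  from bchoice[OF this] obtain \<rho>
    where \<rho>: "\<forall>w\<in>cube n. \<rho> w \<in> cube n \<and> (\<forall>p\<in>Bcarrier n. Beval n (a p) w = Beval n p (\<rho> w))"
    by blast
  have a_bij: "bij_betw a (Bcarrier n) (Bcarrier n)" and a_ext: "a \<in> extensional (Bcarrier n)"
    using a by (simp_all add: mem_carrier_BAut_iff)
  have "a = pullback n \<rho>"
  proof
    fix p
    show "a p = pullback n \<rho> p"
    proof (cases "p \<in> Bcarrier n")
      case True
      then show ?thesis
        using \<rho> bij_betwE[OF a_bij]
        by (intro Beval_inj[of _ n]) (simp_all add: pullback_in_Bcarrier Beval_pullback)
    next
      case False
      then show ?thesis using a_ext by (simp add: pullback_def extensional_def)
    qed
  qed
  moreover have "\<rho> \<in> cube n \<rightarrow> cube n" using \<rho> by blast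
  ultimately show thesis using that by blast
qed

lemma BAut_is_pullback:
  assumes a: "a \<in> carrier (BAut n)"
  obtains \<sigma> where "\<sigma> \<in> Bij (cube n)" "a = pullback n \<sigma>"
proof -
  obtain \<rho> where \<rho>: "\<rho> \<in> cube n \<rightarrow> cube n" and a_eq: "a = pullback n \<rho>"
    using BAut_eq_pullback[OF a] by blast
  have "Bcarrier n \<subseteq> pullback n \<rho> ` Bcarrier n"
    using a a_eq by (simp add: mem_carrier_BAut_iff bij_betw_def)
  then have "inj_on \<rho> (cube n)" by (rule inj_on_if_pullback_surj)
  moreover have "\<rho> ` cube n \<subseteq> cube n" using \<rho> by blast
  ultimately have "bij_betw \<rho> (cube n) (cube n)"
    unfolding bij_betw_def using endo_inj_surj[OF finite_cube] by blast
  then have "restrict \<rho> (cube n) \<in> Bij (cube n)" by (simp add: Bij_def)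
  moreover have "a = pullback n (restrict \<rho> (cube n))"
    unfolding a_eq by (rule pullback_cong) simp
  ultimately show thesis by (rule that)
qed

lemma pullback_eq_imp_eq_on_cube:
  assumes "pullback n \<sigma> = pullback n \<tau>" "\<sigma> \<in> cube n \<rightarrow> cube n" "\<tau> \<in> cube n \<rightarrow> cube n" "v \<in> cube n"
  shows "\<sigma> v = \<tau> v"
proof (rule vertices_separated_by_Beval)
  fix p assume "p \<in> Bcarrier n"
  then have "Beval n p (\<sigma> v) = Beval n (pullback n \<sigma> p) v"
    using assms(4) by (simp add: Beval_pullback)
  also have "\<dots> = Beval n p (\<tau> v)"
    using \<open>p \<in> Bcarrier n\<close> assms(4) by (simp add: assms(1) Beval_pullback)
  finally show "Beval n p (\<sigma> v) = Beval n p (\<tau> v)" .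
qed (use assms in auto)

(* Precomposition is contravariant, hence the inverse. *)

definition induced_aut ::
    "nat \<Rightarrow> ((nat \<Rightarrow> int) \<Rightarrow> (nat \<Rightarrow> int)) \<Rightarrow> (nat set \<Rightarrow> int) \<Rightarrow> (nat set \<Rightarrow> int)" where
  "induced_aut n g = pullback n (inv\<^bsub>BijGroup (cube n)\<^esub> g)"

lemma inv_BijGroup_in_Bij: "g \<in> Bij S \<Longrightarrow> inv\<^bsub>BijGroup S\<^esub> g \<in> Bij S"
  by (metis carrier_BijGroup group.inv_closed group_BijGroup)

lemma Bij_imp_bij_betw: "f \<in> Bij S \<Longrightarrow> bij_betw f S S"
  by (simp add: Bij_def)

lemma induced_aut_in_BAut: "g \<in> Bij (cube n) \<Longrightarrow> induced_aut n g \<in> carrier (BAut n)"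
  unfolding induced_aut_def
  by (intro pullback_in_BAut Bij_imp_bij_betw inv_BijGroup_in_Bij)

lemma induced_aut_mult:
  assumes "g \<in> Bij (cube n)" "h \<in> Bij (cube n)"
  shows "induced_aut n (g \<otimes>\<^bsub>BijGroup (cube n)\<^esub> h)
    = compose (Bcarrier n) (induced_aut n g) (induced_aut n h)"
proof -
  interpret group "BijGroup (cube n)" by (rule group_BijGroup)
  let ?i = "m_inv (BijGroup (cube n))"
  have inv: "?i g \<in> Bij (cube n)" "?i h \<in> Bij (cube n)"
    using assms by (simp_all add: inv_BijGroup_in_Bij)
  have "?i (g \<otimes>\<^bsub>BijGroup (cube n)\<^esub> h) = ?i h \<otimes>\<^bsub>BijGroup (cube n)\<^esub> ?i g"
    using assms by (intro inv_mult_group) (simp_all add: carrier_BijGroup)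
  also have "\<dots> = compose (cube n) (?i h) (?i g)"
    by (rule mult_BijGroup[OF inv(2) inv(1)])
  finally have inv_mult: "?i (g \<otimes>\<^bsub>BijGroup (cube n)\<^esub> h) = compose (cube n) (?i h) (?i g)" .
  have "induced_aut n (g \<otimes>\<^bsub>BijGroup (cube n)\<^esub> h) = pullback n (?i h \<circ> ?i g)"
    unfolding induced_aut_def inv_mult by (rule pullback_cong) (simp add: compose_def)
  also have "\<dots> = compose (Bcarrier n) (induced_aut n g) (induced_aut n h)"
    unfolding induced_aut_def by (intro pullback_comp funcset_mem[OF Bij_imp_funcset[OF inv(1)]])
  finally show ?thesis .
qed

lemma induced_aut_image: "induced_aut n ` Bij (cube n) = carrier (BAut n)"
proof
  show "induced_aut n ` Bij (cube n) \<subseteq> carrier (BAut n)"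
    using induced_aut_in_BAut by blast
  show "carrier (BAut n) \<subseteq> induced_aut n ` Bij (cube n)"
  proof
    fix a assume "a \<in> carrier (BAut n)"
    then obtain \<sigma> where \<sigma>: "\<sigma> \<in> Bij (cube n)" and a: "a = pullback n \<sigma>"
      by (rule BAut_is_pullback)
    have "inv\<^bsub>BijGroup (cube n)\<^esub> (inv\<^bsub>BijGroup (cube n)\<^esub> \<sigma>) = \<sigma>"
      using \<sigma> by (metis carrier_BijGroup group.inv_inv group_BijGroup)
    then have "induced_aut n (inv\<^bsub>BijGroup (cube n)\<^esub> \<sigma>) = a"
      by (simp add: induced_aut_def a)
    then show "a \<in> induced_aut n ` Bij (cube n)"
      using inv_BijGroup_in_Bij[OF \<sigma>] by blast
  qed
qed

lemma induced_aut_hom_BijGroup: "induced_aut n \<in> hom (BijGroup (cube n)) (BijGroup (Bcarrier n))"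
proof (rule homI)
  fix g assume "g \<in> carrier (BijGroup (cube n))"
  then show "induced_aut n g \<in> carrier (BijGroup (Bcarrier n))"
    using induced_aut_in_BAut by (auto simp: carrier_BijGroup carrier_BAut)
next
  fix g h assume "g \<in> carrier (BijGroup (cube n))" "h \<in> carrier (BijGroup (cube n))"
  then have g: "g \<in> Bij (cube n)" and h: "h \<in> Bij (cube n)" by (simp_all add: carrier_BijGroup)
  have "induced_aut n g \<in> Bij (Bcarrier n)" "induced_aut n h \<in> Bij (Bcarrier n)"
    using induced_aut_in_BAut[OF g] induced_aut_in_BAut[OF h] by (simp_all add: carrier_BAut)
  then show "induced_aut n (g \<otimes>\<^bsub>BijGroup (cube n)\<^esub> h)
      = induced_aut n g \<otimes>\<^bsub>BijGroup (Bcarrier n)\<^esub> induced_aut n h"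
    by (simp only: induced_aut_mult[OF g h] mult_BijGroup)
qed

lemma group_BAut: "group (BAut n)"
proof -
  have "group_hom (BijGroup (cube n)) (BijGroup (Bcarrier n)) (induced_aut n)"
    by (simp add: group_hom_def group_hom_axioms_def group_BijGroup induced_aut_hom_BijGroup)
  then have "subgroup (carrier (BAut n)) (BijGroup (Bcarrier n))"
    using group_hom.img_is_subgroup induced_aut_image carrier_BijGroup by metis
  then have "subgroup (ring_iso (Bring n) (Bring n) \<inter> Bij (Bcarrier n)) (BijGroup (Bcarrier n))"
    by (simp only: carrier_BAut)
  then show ?thesis
    unfolding BAut_def by (rule subgroup.subgroup_is_group[OF _ group_BijGroup])
qed

lemma inj_on_induced_aut: "inj_on (induced_aut n) (Bij (cube n))"
proof (rule inj_onI)
  fix g h assume g: "g \<in> Bij (cube n)" and h: "h \<in> Bij (cube n)"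
    and eq: "induced_aut n g = induced_aut n h"
  let ?i = "m_inv (BijGroup (cube n))"
  have "?i g = ?i h"
  proof (rule extensionalityI[OF Bij_imp_extensional Bij_imp_extensional])
    show "?i g \<in> Bij (cube n)" "?i h \<in> Bij (cube n)" using g h
      by (simp_all add: inv_BijGroup_in_Bij)
    fix v assume "v \<in> cube n"
    then show "?i g v = ?i h v"
      using eq Bij_imp_funcset[OF \<open>?i g \<in> Bij (cube n)\<close>] Bij_imp_funcset[OF \<open>?i h \<in> Bij (cube n)\<close>]
      unfolding induced_aut_def by (rule pullback_eq_imp_eq_on_cube[rotated 3])
  qed
  then show "g = h"
    using g h group.inv_inv[OF group_BijGroup] by (metis carrier_BijGroup)
qed

lemma induced_aut_iso: "induced_aut n \<in> iso (BijGroup (cube n)) (BAut n)"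
proof (rule isoI)
  show "induced_aut n \<in> hom (BijGroup (cube n)) (BAut n)"
  proof (rule homI)
    fix g assume "g \<in> carrier (BijGroup (cube n))"
    then show "induced_aut n g \<in> carrier (BAut n)"
      by (simp add: carrier_BijGroup induced_aut_in_BAut)
  next
    fix g h assume "g \<in> carrier (BijGroup (cube n))" "h \<in> carrier (BijGroup (cube n))"
    then show "induced_aut n (g \<otimes>\<^bsub>BijGroup (cube n)\<^esub> h)
        = induced_aut n g \<otimes>\<^bsub>BAut n\<^esub> induced_aut n h"
      using hom_mult[OF induced_aut_hom_BijGroup] by (simp add: mult_BAut)
  qed
  show "bij_betw (induced_aut n) (carrier (BijGroup (cube n))) (carrier (BAut n))"
    by (simp add: bij_betw_def carrier_BijGroup inj_on_induced_aut induced_aut_image)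
qed

section \<open>Polynomials and their classes in B(K)\<close>

(* The value of P at the 0/1-vector whose coordinates equal to 1 are those in A. *)

definition zpoly_eval :: "nat set \<Rightarrow> zpoly \<Rightarrow> int" where
  "zpoly_eval A P =
    (\<Sum>m\<in>Poly_Mapping.keys P. Poly_Mapping.lookup P m * of_bool (Poly_Mapping.keys m \<subseteq> A))"

lemma zpoly_eval_superset:
  assumes "finite M" "Poly_Mapping.keys P \<subseteq> M"
  shows "zpoly_eval A P = (\<Sum>m\<in>M. Poly_Mapping.lookup P m * of_bool (Poly_Mapping.keys m \<subseteq> A))"
  unfolding zpoly_eval_def using assms by (intro sum.mono_neutral_left) (auto simp: in_keys_iff)

lemma zpoly_eval_diff: "zpoly_eval A (P - Q) = zpoly_eval A P - zpoly_eval A Q"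
proof -
  let ?M = "Poly_Mapping.keys P \<union> Poly_Mapping.keys Q"
  have "zpoly_eval A (P - Q)
      = (\<Sum>m\<in>?M. Poly_Mapping.lookup (P - Q) m * of_bool (Poly_Mapping.keys m \<subseteq> A))"
    by (rule zpoly_eval_superset) (simp_all add: keys_diff)
  also have "\<dots> = zpoly_eval A P - zpoly_eval A Q"
    by (simp add: zpoly_eval_superset[of ?M] lookup_minus left_diff_distrib sum_subtractf)
  finally show ?thesis .
qed

lemma zpoly_eval_single:
  "zpoly_eval A (Poly_Mapping.single m c) = c * of_bool (Poly_Mapping.keys m \<subseteq> A)"
  by (simp add: zpoly_eval_def)

lemma keys_add_monomials:
  "Poly_Mapping.keys (m + m' :: nat \<Rightarrow>\<^sub>0 nat) = Poly_Mapping.keys m \<union> Poly_Mapping.keys m'"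
  by (auto simp: in_keys_iff lookup_add)

lemma zpoly_eval_mult: "zpoly_eval A (P * Q) = zpoly_eval A P * zpoly_eval A Q"
proof -
  have monomial: "zpoly_eval A (frag_of m * Q) = zpoly_eval A (frag_of m) * zpoly_eval A Q" for m
    using subset_UNIV
  proof (induction Q rule: frag_induction)
    case (one m')
    then show ?case by (simp add: mult_single zpoly_eval_single keys_add_monomials)
  next
    case (diff a b)
    then show ?case by (simp add: right_diff_distrib zpoly_eval_diff)
  qed (simp add: zpoly_eval_def)
  show ?thesis
    using subset_UNIV
  proof (induction P rule: frag_induction)
    case (one m)
    show ?case by (rule monomial)
  next
    case (diff a b)
    then show ?case by (simp add: left_diff_distrib zpoly_eval_diff)
  qed (simp add: zpoly_eval_def)
qed

lemma zpoly_eval_one: "zpoly_eval A 1 = 1"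
  by (simp add: zpoly_eval_def)

lemma zpoly_eval_pvar: "zpoly_eval A (pvar i) = of_bool (i \<in> A)"
  by (simp add: pvar_def zpoly_eval_single)

lemma zpoly_eval_prod: "finite I \<Longrightarrow> zpoly_eval A (\<Prod>i\<in>I. P i) = (\<Prod>i\<in>I. zpoly_eval A (P i))"
  by (induction I rule: finite_induct) (simp_all add: zpoly_eval_one zpoly_eval_mult)

lemma Beval_Bproj: "v \<in> cube n \<Longrightarrow> Beval n (Bproj P) v = zpoly_eval (ones n v) P"
proof -
  assume "v \<in> cube n"
  let ?A = "ones n v" and ?c = "Poly_Mapping.lookup P"
  let ?M = "{m \<in> Poly_Mapping.keys P. Poly_Mapping.keys m \<subseteq> ?A}"
  have "Beval n (Bproj P) v
      = (\<Sum>S\<in>Pow ?A. \<Sum>m\<in>{m \<in> Poly_Mapping.keys P. Poly_Mapping.keys m = S}. ?c m)"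
    using \<open>v \<in> cube n\<close> by (simp add: Beval_def Bproj_def)
  also have "\<dots> = (\<Sum>S\<in>Pow ?A. \<Sum>m\<in>{m \<in> ?M. Poly_Mapping.keys m = S}. ?c m)"
    by (intro sum.cong refl) auto
  also have "\<dots> = (\<Sum>m\<in>?M. ?c m)"
    by (rule sum.group) (auto simp: finite_ones)
  also have "\<dots> = zpoly_eval ?A P"
    unfolding zpoly_eval_def sum.inter_filter[OF finite_keys] by (intro sum.cong) auto
  finally show ?thesis .
qed

definition vars_in :: "nat set \<Rightarrow> zpoly \<Rightarrow> bool" where
  "vars_in V P \<longleftrightarrow> (\<forall>m\<in>Poly_Mapping.keys P. Poly_Mapping.keys m \<subseteq> V)"

lemma vars_in_pvar: "i \<in> V \<Longrightarrow> vars_in V (pvar i)"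
  by (simp add: vars_in_def pvar_def)

lemma vars_in_one: "vars_in V 1"
  by (simp add: vars_in_def)

lemma vars_in_diff: "vars_in V P \<Longrightarrow> vars_in V Q \<Longrightarrow> vars_in V (P - Q)"
  unfolding vars_in_def using keys_diff[of P Q] by blast

lemma vars_in_mult:
  assumes "vars_in V P" "vars_in V Q"
  shows "vars_in V (P * Q)"
  unfolding vars_in_def
proof
  fix m assume "m \<in> Poly_Mapping.keys (P * Q)"
  then obtain a b where "m = a + b" "a \<in> Poly_Mapping.keys P" "b \<in> Poly_Mapping.keys Q"
    using keys_mult[of P Q] by blast
  then show "Poly_Mapping.keys m \<subseteq> V"
    using assms by (simp add: vars_in_def keys_add_monomials)
qed

lemma vars_in_prod: "finite I \<Longrightarrow> (\<And>i. i \<in> I \<Longrightarrow> vars_in V (P i)) \<Longrightarrow> vars_in V (\<Prod>i\<in>I. P i)"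
  by (induction I rule: finite_induct) (simp_all add: vars_in_one vars_in_mult)

lemma vars_in_Gset: "P \<in> Gset n \<Longrightarrow> vars_in {1..n} P"
  by (induction rule: Gset.induct)
    (simp_all add: vars_in_pvar vars_in_one vars_in_diff vars_in_mult)

lemma Gset_prod:
  "finite I \<Longrightarrow> I \<noteq> {} \<Longrightarrow> (\<And>i. i \<in> I \<Longrightarrow> P i \<in> Gset n) \<Longrightarrow> (\<Prod>i\<in>I. P i) \<in> Gset n"
  by (induction I rule: finite_ne_induct) (simp_all add: Gset.prod)

lemma Bproj_nonzero:
  assumes "Bproj P S \<noteq> 0"
  obtains m where "m \<in> Poly_Mapping.keys P" "Poly_Mapping.keys m = S"
proof (rule ccontr)
  assume "\<not> thesis"
  then have empty: "{m \<in> Poly_Mapping.keys P. Poly_Mapping.keys m = S} = {}" using that by blast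
  have "Bproj P S = 0" unfolding Bproj_def empty by simp
  then show False using assms by simp
qed

lemma vars_in_Bproj_nonzero: "vars_in V P \<Longrightarrow> Bproj P S \<noteq> 0 \<Longrightarrow> S \<subseteq> V"
  by (metis Bproj_nonzero vars_in_def)

lemma Bproj_in_Bcarrier: "vars_in {1..n} P \<Longrightarrow> Bproj P \<in> Bcarrier n"
  unfolding Bcarrier_def using vars_in_Bproj_nonzero by blast

lemma Bindep_Bproj: "vars_in V P \<Longrightarrow> k \<notin> V \<Longrightarrow> Bindep k (Bproj P)"
  unfolding Bindep_def using vars_in_Bproj_nonzero by blast

lemma Bproj_eqI:
  assumes "vars_in {1..n} P" "vars_in {1..n} Q" "\<And>A. A \<subseteq> {1..n} \<Longrightarrow> zpoly_eval A P = zpoly_eval A Q"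
  shows "Bproj P = Bproj Q"
  using assms
    by (intro Beval_inj[of _ n])
      (simp_all add: Bproj_in_Bcarrier Beval_Bproj assms(3)[OF ones_subset])

section \<open>Transpositions along the edges of the cube\<close>

definition flip :: "nat \<Rightarrow> (nat \<Rightarrow> int) \<Rightarrow> (nat \<Rightarrow> int)" where
  "flip k a = a(k := 1 - a k)"

definition cube_edges :: "nat \<Rightarrow> ((nat \<Rightarrow> int) \<times> (nat \<Rightarrow> int)) set" where
  "cube_edges n = {(a, flip k a) | a k. a \<in> cube n \<and> k \<in> {1..n}}"

lemma flip_apply_same: "flip k a k = 1 - a k"
  by (simp add: flip_def)

lemma flip_apply_other: "i \<noteq> k \<Longrightarrow> flip k a i = a i"
  by (simp add: flip_def)

lemma flip_neq: "a \<noteq> flip k a"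
proof
  assume "a = flip k a"
  then have "a k = flip k a k" by (rule arg_cong)
  then show False by (simp add: flip_apply_same) presburger
qed

lemma flip_in_cube: "a \<in> cube n \<Longrightarrow> k \<in> {1..n} \<Longrightarrow> flip k a \<in> cube n"
  by (auto simp: cube_def flip_def PiE_iff extensional_def)

lemma cube_edges_subset: "cube_edges n \<subseteq> cube n \<times> cube n"
  by (auto simp: cube_edges_def flip_in_cube)

lemma cube_connected:
  assumes "a \<in> cube n" "b \<in> cube n"
  shows "(a, b) \<in> (cube_edges n)\<^sup>*"
  using assms
proof (induction "card {i \<in> {1..n}. a i \<noteq> b i}" arbitrary: a rule: less_induct)
  case less
  show ?case
  proof (cases "a = b")
    case False
    then obtain k where k: "k \<in> {1..n}" "a k \<noteq> b k"
      using cube_eqI[OF less.prems] by blast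
    let ?a' = "flip k a"
    have "b k = 1 - a k"
      using k cube_coordinate[OF less.prems(1) k(1)] cube_coordinate[OF less.prems(2) k(1)] by auto
    then have "{i \<in> {1..n}. ?a' i \<noteq> b i} = {i \<in> {1..n}. a i \<noteq> b i} - {k}"
      by (auto simp: flip_def)
    then have "card {i \<in> {1..n}. ?a' i \<noteq> b i} < card {i \<in> {1..n}. a i \<noteq> b i}"
      using k by (simp only:) (rule card_Diff1_less, simp_all)
    then have "(?a', b) \<in> (cube_edges n)\<^sup>*"
      using less.hyps flip_in_cube[OF less.prems(1) k(1)] less.prems(2) by blast
    moreover have "(a, ?a') \<in> cube_edges n"
      using less.prems(1) k(1) by (auto simp: cube_edges_def)
    ultimately show ?thesis by (rule converse_rtrancl_into_rtrancl[rotated])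
  qed simp
qed

lemma cube_agree_off_coordinate:
  assumes "a \<in> cube n" "v \<in> cube n" "k \<in> {1..n}"
  shows "(\<forall>i\<in>{1..n} - {k}. v i = a i) \<longleftrightarrow> v = a \<or> v = flip k a"
proof
  assume agree: "\<forall>i\<in>{1..n} - {k}. v i = a i"
  have "v k = a k \<or> v k = 1 - a k"
    using cube_coordinate[OF assms(1,3)] cube_coordinate[OF assms(2,3)] by auto
  then show "v = a \<or> v = flip k a"
  proof
    assume "v k = a k"
    then have "v = a" using agree by (intro cube_eqI[OF assms(2,1)]) (metis Diff_iff singletonD)
    then show ?thesis ..
  next
    assume "v k = 1 - a k"
    then have "v = flip k a"
      using agree by (intro cube_eqI[OF assms(2) flip_in_cube[OF assms(1,3)]]) (auto simp: flip_def)
    then show ?thesis ..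
  qed
qed (auto simp: flip_def)

definition literal :: "(nat \<Rightarrow> int) \<Rightarrow> nat \<Rightarrow> zpoly" where
  "literal a i = (if a i = 1 then pvar i else 1 - pvar i)"

(* The indicator of the edge {a, flip k a}.  The first factor is 1 on the cube; it keeps
   edge_poly in G also for n = 1, when the product of literals is empty. *)

definition edge_poly :: "nat \<Rightarrow> nat \<Rightarrow> (nat \<Rightarrow> int) \<Rightarrow> zpoly" where
  "edge_poly n k a = (1 - pvar k * (1 - pvar k)) * (\<Prod>i\<in>{1..n} - {k}. literal a i)"

lemma zpoly_eval_literal: "zpoly_eval A (literal a i) = of_bool (i \<in> A \<longleftrightarrow> a i = 1)"
  by (simp add: literal_def zpoly_eval_diff zpoly_eval_one zpoly_eval_pvar)

lemma zpoly_eval_edge_poly: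
  "zpoly_eval A (edge_poly n k a) = of_bool (\<forall>i\<in>{1..n} - {k}. i \<in> A \<longleftrightarrow> a i = 1)"
proof -
  have "zpoly_eval A (1 - pvar k * (1 - pvar k)) = 1"
    by (simp add: zpoly_eval_diff zpoly_eval_mult zpoly_eval_one zpoly_eval_pvar)
  moreover have "(\<Prod>i\<in>I. of_bool (P i) :: int) = of_bool (\<forall>i\<in>I. P i)" if "finite I" for I P
    using that by (induction I rule: finite_induct) auto
  ultimately show ?thesis
    by (simp add: edge_poly_def zpoly_eval_mult zpoly_eval_prod zpoly_eval_literal)
qed

lemma edge_poly_in_Gset:
  assumes "k \<in> {1..n}"
  shows "edge_poly n k a \<in> Gset n"
proof -
  have "1 - pvar k * (1 - pvar k) \<in> Gset n"
    using assms by (intro Gset.intros)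
  moreover have "(\<Prod>i\<in>{1..n} - {k}. literal a i) \<in> Gset n" if "{1..n} - {k} \<noteq> {}"
    using that by (intro Gset_prod) (auto simp: literal_def intro!: Gset.compl Gset.var)
  ultimately show ?thesis
  proof (cases "{1..n} - {k} = {}")
    case True
    show ?thesis
      using \<open>1 - pvar k * (1 - pvar k) \<in> Gset n\<close> unfolding edge_poly_def True by simp
  qed (auto simp: edge_poly_def intro: Gset.prod)
qed

lemma Beval_Bproj_edge_poly:
  assumes "a \<in> cube n" "k \<in> {1..n}" "v \<in> cube n"
  shows "Beval n (Bproj (edge_poly n k a)) v = of_bool (v = a \<or> v = flip k a)"
proof -
  have "(i \<in> ones n v \<longleftrightarrow> a i = 1) \<longleftrightarrow> v i = a i" if "i \<in> {1..n}" for i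
    using cube_coordinate[OF assms(1) that] cube_coordinate[OF assms(3) that] that
    by (auto simp: ones_def)
  then show ?thesis
    using cube_agree_off_coordinate[OF assms(1,3,2)]
      by (simp add: Beval_Bproj assms zpoly_eval_edge_poly)
qed

lemma Bindep_Bproj_edge_poly:
  assumes "k \<in> {1..n}"
  shows "Bindep k (Bproj (edge_poly n k a))"
proof -
  let ?Q = "\<Prod>i\<in>{1..n} - {k}. literal a i"
  have vars: "vars_in ({1..n} - {k}) ?Q"
    by (intro vars_in_prod) (auto simp: literal_def intro!: vars_in_pvar vars_in_diff vars_in_one)
  have "Bproj (edge_poly n k a) = Bproj ?Q"
  proof (rule Bproj_eqI)
    show "vars_in {1..n} (edge_poly n k a)" using edge_poly_in_Gset[OF assms] by (rule vars_in_Gset)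
    show "vars_in {1..n} ?Q" using vars unfolding vars_in_def by blast
    show "zpoly_eval A (edge_poly n k a) = zpoly_eval A ?Q" for A
      by (simp add: zpoly_eval_edge_poly zpoly_eval_prod zpoly_eval_literal)
  qed
  then show ?thesis using Bindep_Bproj[OF vars] by simp
qed

lemma pullback_transpose_flip_Bvar_same:
  assumes a: "a \<in> cube n" and k: "k \<in> {1..n}"
  defines "h \<equiv> Bproj (edge_poly n k a)"
  shows "pullback n (transpose a (flip k a)) (Bvar k)
    = (\<lambda>S. Bvar k S + h S - 2 * Bmult (Bvar k) h S)"
proof (rule Beval_inj[of _ n])
  let ?b = "flip k a"
  have perm: "transpose a ?b permutes cube n" using a flip_in_cube[OF a k]
    by (rule permutes_swap_id)
  fix v assume v: "v \<in> cube n"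
  let ?e = "of_bool (v = a \<or> v = ?b) :: int"
  have "Beval n (pullback n (transpose a ?b) (Bvar k)) v = transpose a ?b v k"
    using v k permutes_in_image[OF perm] by (simp add: Beval_pullback Bvar_in_Bcarrier Beval_Bvar)
  also have "\<dots> = v k + ?e - 2 * (v k * ?e)"
  proof -
    consider "v = a" | "v = ?b" | "v \<noteq> a" "v \<noteq> ?b" by blast
    then show ?thesis
    proof cases
      case 1
      then show ?thesis by (simp add: flip_apply_same)
    next
      case 2
      then show ?thesis using flip_neq[of a k] by (simp add: flip_apply_same)
    qed simp
  qed
  also have "\<dots> = Beval n (\<lambda>S. Bvar k S + h S - 2 * Bmult (Bvar k) h S) v"
    using v a k
      by (simp add: h_def Beval_add_diff_mult Beval_Bmult Beval_Bvar Beval_Bproj_edge_poly)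
  finally show "Beval n (pullback n (transpose a ?b) (Bvar k)) v
      = Beval n (\<lambda>S. Bvar k S + h S - 2 * Bmult (Bvar k) h S) v" .
next
  show "pullback n (transpose a (flip k a)) (Bvar k) \<in> Bcarrier n"
    by (rule pullback_in_Bcarrier[OF Bvar_in_Bcarrier[OF k]])
  have "Bvar k \<in> Bcarrier n" using k by (rule Bvar_in_Bcarrier)
  moreover have "h \<in> Bcarrier n"
    unfolding h_def using edge_poly_in_Gset[OF k] by (intro Bproj_in_Bcarrier vars_in_Gset)
  ultimately show "(\<lambda>S. Bvar k S + h S - 2 * Bmult (Bvar k) h S) \<in> Bcarrier n"
    using Bmult_in_Bcarrier by (simp add: mem_Bcarrier_iff Bcarrier_outside)
qed

lemma pullback_transpose_flip_Bvar_other: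
  assumes a: "a \<in> cube n" and k: "k \<in> {1..n}" and i: "i \<in> {1..n}" "i \<noteq> k"
  shows "pullback n (transpose a (flip k a)) (Bvar i) = Bvar i"
proof (rule Beval_inj[of _ n])
  have perm: "transpose a (flip k a) permutes cube n" using a flip_in_cube[OF a k]
    by (rule permutes_swap_id)
  fix v assume v: "v \<in> cube n"
  have "transpose a (flip k a) v i = v i"
    using i(2) by (simp add: transpose_def flip_apply_other)
  then show "Beval n (pullback n (transpose a (flip k a)) (Bvar i)) v = Beval n (Bvar i) v"
    using v i permutes_in_image[OF perm] by (simp add: Beval_pullback Bvar_in_Bcarrier Beval_Bvar)
qed (use i in \<open>simp_all add: pullback_in_Bcarrier Bvar_in_Bcarrier\<close>)

lemma pullback_transpose_flip_in_BGens:
  assumes a: "a \<in> cube n" and k: "k \<in> {1..n}"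
  shows "pullback n (transpose a (flip k a)) \<in> BGens n"
proof -
  let ?\<alpha> = "pullback n (transpose a (flip k a))" and ?h = "edge_poly n k a"
  have "transpose a (flip k a) permutes cube n" using a flip_in_cube[OF a k]
    by (rule permutes_swap_id)
  then have "?\<alpha> \<in> carrier (BAut n)" by (intro pullback_in_BAut permutes_imp_bij)
  moreover have "\<exists>k\<in>{1..n}. \<exists>h\<in>Gset n. Bindep k (Bproj h) \<and>
      ?\<alpha> (Bvar k) = (\<lambda>S. Bvar k S + Bproj h S - 2 * Bmult (Bvar k) (Bproj h) S) \<and>
      (\<forall>i\<in>{1..n}. i \<noteq> k \<longrightarrow> ?\<alpha> (Bvar i) = Bvar i)"
    using k edge_poly_in_Gset[OF k] Bindep_Bproj_edge_poly[OF k]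
      pullback_transpose_flip_Bvar_same[OF a k] pullback_transpose_flip_Bvar_other[OF a k]
    by (intro bexI[of _ k] bexI[of _ ?h] conjI ballI impI)
  ultimately show ?thesis
    unfolding BGens_def by (rule CollectI[of _ ?\<alpha>, OF conjI])
qed

lemma induced_aut_transpose:
  assumes "a \<in> cube n" "b \<in> cube n"
  shows "induced_aut n (restrict (transpose a b) (cube n)) = pullback n (transpose a b)"
proof -
  interpret group "BijGroup (cube n)" by (rule group_BijGroup)
  let ?t = "restrict (transpose a b) (cube n)"
  have perm: "transpose a b permutes cube n" using assms by (rule permutes_swap_id)
  have t: "?t \<in> carrier (BijGroup (cube n))"
    using assms by (simp add: carrier_BijGroup restrict_transpose_in_Bij)
  have "?t \<otimes>\<^bsub>BijGroup (cube n)\<^esub> ?t = restrict (transpose a b \<circ> transpose a b) (cube n)"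
    by (rule restrict_comp_BijGroup[OF perm perm, symmetric])
  also have "\<dots> = \<one>\<^bsub>BijGroup (cube n)\<^esub>"
    by (simp add: restrict_id_BijGroup)
  finally have inv: "inv\<^bsub>BijGroup (cube n)\<^esub> ?t = ?t"
    by (rule inv_equality[OF _ t t])
  show ?thesis
    unfolding induced_aut_def inv by (rule pullback_cong) simp
qed

lemma induced_aut_edge_transpositions:
  "induced_aut n ` {restrict (transpose a b) (cube n) | a b. (a, b) \<in> cube_edges n} \<subseteq> BGens n"
proof
  fix \<alpha>
  assume "\<alpha> \<in> induced_aut n ` {restrict (transpose a b) (cube n) | a b. (a, b) \<in> cube_edges n}"
  then obtain a b
    where "\<alpha> = induced_aut n (restrict (transpose a b) (cube n))" "(a, b) \<in> cube_edges n"
    by blast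
  then obtain k where "\<alpha> = induced_aut n (restrict (transpose a (flip k a)) (cube n))"
    "a \<in> cube n" "k \<in> {1..n}"
    by (auto simp: cube_edges_def)
  then show "\<alpha> \<in> BGens n"
    by (simp add: induced_aut_transpose flip_in_cube pullback_transpose_flip_in_BGens)
qed

lemma generate_BGens: "generate (BAut n) (BGens n) = carrier (BAut n)"
proof
  interpret BAut: group "BAut n" by (rule group_BAut)
  show "generate (BAut n) (BGens n) \<subseteq> carrier (BAut n)"
    unfolding BGens_def by (rule BAut.generate_incl[OF Collect_restrict])
  let ?T = "{restrict (transpose a b) (cube n) | a b. (a, b) \<in> cube_edges n}"
  have T: "?T \<subseteq> carrier (BijGroup (cube n))"
    using cube_edges_subset by (rule transpositions_subset_carrier_BijGroup)
  have hom: "group_hom (BijGroup (cube n)) (BAut n) (induced_aut n)"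
    by (rule group_hom.intro[OF group_BijGroup group_BAut])
      (simp add: group_hom_axioms_def iso_imp_homomorphism[OF induced_aut_iso])
  have gens: "induced_aut n ` ?T \<subseteq> BGens n"
    by (rule induced_aut_edge_transpositions)
  have "carrier (BAut n) = induced_aut n ` carrier (BijGroup (cube n))"
    by (simp add: carrier_BijGroup induced_aut_image)
  also have "\<dots> = induced_aut n ` generate (BijGroup (cube n)) ?T"
    using connected_transpositions_generate_BijGroup[OF finite_cube cube_edges_subset cube_connected]
    by (simp only:)
  also have "\<dots> = generate (BAut n) (induced_aut n ` ?T)"
    by (rule group_hom.generate_img[OF hom T, symmetric])
  also have "\<dots> \<subseteq> generate (BAut n) (BGens n)"
    by (rule BAut.mono_generate[OF gens])
  finally show "carrier (BAut n) \<subseteq> generate (BAut n) (BGens n)" .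
qed

theorem proposition1:
  fixes n :: nat
  shows "generate (BAut n) (BGens n) = carrier (BAut n) \<and> BAut n \<cong> BijGroup (cube n)"
  using generate_BGens group.iso_sym[OF group_BijGroup is_isoI[OF induced_aut_iso]] by (rule conjI)

end
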